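(* Let $(\xi_n)_{n\geq1}$ be i.i.d. with $\mathbf{P}(\xi_1=1)=p=1-\mathbf{P}(\xi_1=-1)$, $p\in(0,1)$. For $x\geq1$ set $W_0:=x$, $B_1:=1$, $W_n:=W_{n-1}+\xi_nB_n$, $B_{n+1}:=B_n2^{\xi_n}$ for $n\geq1$, and $f(x,p):=\mathbf{P}(W_n\leq0\text{ for some }n)$. Then for each fixed $x>2$, the function $p\mapsto f(x,p)$ is strictly increasing on $(0,1/2)$.
   Context: $f(x,p)$ is the ruin probability of a gambler with initial fortune $x$ who starts by betting $1$, doubles the bet after each win and halves it after each loss, winning each round independently with probability $p$. *)

theory Defs
  imports "HOL-Probability.Probability"
begin

text \<open>A play is an infinite sequence of coin outcomes; True = the gambler wins
  the round (xi = 1), False = loses (xi = -1).  Component n (0-based) of the stream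
  is xi_(n+1).\<close>

definition xi :: "bool stream \<Rightarrow> nat \<Rightarrow> real" where
  "xi \<omega> n = (if \<omega> !! n then 1 else -1)"

text \<open>bet \<omega> n = B_(n+1): B_1 = 1, B_(n+1) = B_n * 2 powr xi_n.\<close>
fun bet :: "bool stream \<Rightarrow> nat \<Rightarrow> real" where
  "bet \<omega> 0 = 1"
| "bet \<omega> (Suc n) = bet \<omega> n * 2 powr xi \<omega> n"

fun fortune :: "real \<Rightarrow> bool stream \<Rightarrow> nat \<Rightarrow> real" where
  "fortune x \<omega> 0 = x"
| "fortune x \<omega> (Suc n) = fortune x \<omega> n + xi \<omega> n * bet \<omega> n"

definition coin_space :: "real \<Rightarrow> bool stream measure" where
  "coin_space p = stream_space (measure_pmf (bernoulli_pmf p))"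

definition ruin_prob :: "real \<Rightarrow> real \<Rightarrow> real" where
  "ruin_prob x p = measure (coin_space p)
     {\<omega> \<in> space (coin_space p). \<exists>n. fortune x \<omega> n \<le> 0}"

end

theory Submission
  imports Defs
begin

text \<open>
  Let Y_n be the total stake on the rounds won before round n. Since a win doubles and a loss
  halves the bet, W_n = x - 2 + 2 B_n - Y_n. For p < 1/2 there is an a in (0, 1] with
  E[B_n^a] = (p 2^a + (1 - p) 2^-a)^n tending to 0, so almost surely the bets become arbitrarily
  small infinitely often, and ruin occurs iff Y_n > x - 2 for some n.

  Conditioning on the first round, the probability h_p(c) that Y_n > c for some n satisfies
  h_p(c) = p h_p((c - 1)/2) + (1 - p) h_p(2c), and h_p(c) = 1 for c < 0. Its finite-horizon
  versions show by induction that h_p(c) is nondecreasing in p. Markov's inequality for Y_n^a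
  gives h_p(C) < 1 for some C, and the recursion spreads this to all c > 0. For p < p' < 1/2 the
  recursion then makes h_p'(c) - h_p(c) positive for 0 < c < 1, where
  h_p'((c - 1)/2) = 1 > h_p'(2c), and carries positivity from c - 1/2 to c.
\<close>

lemma ennreal_convex_combination:
  assumes "0 \<le> p" "p \<le> 1" "0 \<le> u" "0 \<le> v"
  shows "ennreal p * ennreal u + ennreal (1 - p) * ennreal v = ennreal (p * u + (1 - p) * v)"
  using assms by (simp add: ennreal_mult'[symmetric] ennreal_plus[symmetric] del: ennreal_plus)

lemma convex_combination_mono:
  fixes p p' a b a' b' :: real
  assumes "0 \<le> p" "p \<le> p'" "p' \<le> 1" "a \<le> a'" "b \<le> b'" "b' \<le> a'"
  shows "p * a + (1 - p) * b \<le> p' * a' + (1 - p') * b'"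
proof -
  have "p * a \<le> p * a'" "(1 - p) * b \<le> (1 - p) * b'" "(p' - p) * b' \<le> (p' - p) * a'"
    using assms by (simp_all add: mult_left_mono)
  then show ?thesis by (simp add: algebra_simps)
qed

lemma powr_add_le_add_powr:
  fixes u v a :: real
  assumes "0 \<le> u" "0 \<le> v" "0 < a" "a \<le> 1"
  shows "(u + v) powr a \<le> u powr a + v powr a"
proof (cases "u + v = 0")
  case False
  define s where "s = u + v"
  have s: "0 < s" using False assms by (simp add: s_def)
  have "u / s \<le> (u / s) powr a" "v / s \<le> (v / s) powr a"
    using powr_mono'[of a 1 "u / s"] powr_mono'[of a 1 "v / s"] assms s
    by (simp_all add: s_def divide_le_eq_1)
  moreover have "u / s + v / s = 1"
    using s by (simp add: s_def add_divide_distrib[symmetric])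
  ultimately have "1 \<le> (u / s) powr a + (v / s) powr a"
    by linarith
  also have "\<dots> = (u powr a + v powr a) / s powr a"
    using assms s by (simp add: powr_divide add_divide_distrib)
  finally show ?thesis
    using s by (simp add: s_def le_divide_eq)
qed (use assms in simp)

lemma nn_integral_Markov_inequality_measure:
  assumes [measurable]: "g \<in> borel_measurable M" and "0 < \<delta>" "0 \<le> K"
    and "(\<integral>\<^sup>+x. ennreal (g x) \<partial>M) \<le> ennreal K"
  shows "measure M {x\<in>space M. \<delta> \<le> g x} \<le> K / \<delta>"
proof -
  have "1 \<le> ennreal (1 / \<delta>) * ennreal (g x) \<longleftrightarrow> \<delta> \<le> g x" for x
    using assms(2) by (cases "0 \<le> g x") (auto simp: ennreal_mult'[symmetric] field_simps ennreal_neg)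
  then have "{x\<in>space M. \<delta> \<le> g x} = {x\<in>space M. 1 \<le> ennreal (1 / \<delta>) * ennreal (g x)}"
    by auto
  also have "emeasure M \<dots> \<le> ennreal (1 / \<delta>) * (\<integral>\<^sup>+x. ennreal (g x) * indicator (space M) x \<partial>M)"
    by (rule nn_integral_Markov_inequality) auto
  also have "(\<integral>\<^sup>+x. ennreal (g x) * indicator (space M) x \<partial>M) = (\<integral>\<^sup>+x. ennreal (g x) \<partial>M)"
    by (rule nn_integral_cong) simp
  also have "ennreal (1 / \<delta>) * \<dots> \<le> ennreal (1 / \<delta>) * ennreal K"
    using assms(4) by (rule mult_left_mono) simp
  also have "\<dots> = ennreal (K / \<delta>)"
    using assms(2) by (simp add: ennreal_mult'[symmetric])
  finally show ?thesis
    using assms(2,3) by (simp add: measure_def enn2real_leI)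
qed

lemma (in finite_measure) Markov_inequality_powr:
  assumes [measurable]: "g \<in> borel_measurable M" and "0 < c" "0 < a" "0 \<le> K"
    and "(\<integral>\<^sup>+x. ennreal (g x powr a) \<partial>M) \<le> ennreal K"
  shows "measure M {x\<in>space M. c \<le> g x} \<le> K / c powr a"
proof -
  have "measure M {x\<in>space M. c \<le> g x} \<le> measure M {x\<in>space M. c powr a \<le> g x powr a}"
  proof (rule finite_measure_mono)
    show "{x\<in>space M. c \<le> g x} \<subseteq> {x\<in>space M. c powr a \<le> g x powr a}"
      using assms(2,3) by (auto intro: powr_mono2)
  qed measurable
  also have "\<dots> \<le> K / c powr a"
    using assms by (intro nn_integral_Markov_inequality_measure) simp_all
  finally show ?thesis .
qed

lemma real_half_step_induct:
  fixes c :: real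
  assumes "0 < c"
    and base: "\<And>c. 0 < c \<Longrightarrow> c < 1 \<Longrightarrow> P c"
    and step: "\<And>c. 1 \<le> c \<Longrightarrow> P (c - 1 / 2) \<Longrightarrow> P c"
  shows "P c"
proof -
  have half_steps: "P c" if "0 < c" "c < 1 + real n / 2" for n c
    using that
  proof (induction n arbitrary: c)
    case 0
    then show ?case by (simp add: base)
  next
    case (Suc n)
    show ?case
    proof (cases "c < 1")
      case True
      then show ?thesis using base Suc.prems(1) by blast
    next
      case False
      then have "1 \<le> c"
        by simp
      moreover have "0 < c - 1 / 2" "c - 1 / 2 < 1 + real n / 2"
        using False Suc.prems by (auto simp: add_divide_distrib)
      then have "P (c - 1 / 2)"
        by (rule Suc.IH)
      ultimately show ?thesis
        by (rule step)
    qed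
  qed
  obtain n :: nat where "2 * c < n"
    using reals_Archimedean2 by blast
  then show ?thesis
    using \<open>0 < c\<close> by (intro half_steps[of c n]) auto
qed

lemma space_coin_space [simp]: "space (coin_space p) = UNIV"
  by (simp add: coin_space_def space_stream_space)

interpretation coin_space: prob_space "coin_space p" for p
  unfolding coin_space_def
  by (rule prob_space.prob_space_stream_space) (rule prob_space_measure_pmf)

lemma sets_coin_space_Collect:
  "Measurable.pred (coin_space p) P \<Longrightarrow> {\<omega>. P \<omega>} \<in> sets (coin_space p)"
  by (simp add: pred_def)

lemma measure_coin_space_UNIV [simp]: "measure (coin_space p) UNIV = 1"
  using coin_space.prob_space by simp

lemma measurable_snth_coin_space [measurable]: "Measurable.pred (coin_space p) (\<lambda>\<omega>. \<omega> !! k)"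
  unfolding coin_space_def by (simp add: measurable_cong_sets)

lemma measurable_Cons_coin_space [measurable]:
  "(\<lambda>\<omega>. b ## \<omega>) \<in> measurable (coin_space p) (coin_space p)"
  unfolding coin_space_def by measurable

lemma borel_measurable_xi [measurable]: "(\<lambda>\<omega>. xi \<omega> k) \<in> borel_measurable (coin_space p)"
  unfolding xi_def by measurable

lemma borel_measurable_bet [measurable]: "(\<lambda>\<omega>. bet \<omega> k) \<in> borel_measurable (coin_space p)"
  by (induction k) simp_all

lemma borel_measurable_fortune [measurable]:
  "(\<lambda>\<omega>. fortune x \<omega> k) \<in> borel_measurable (coin_space p)"
  by (induction k) simp_all

lemma nn_integral_coin_space_Cons:
  assumes "f \<in> borel_measurable (coin_space p)" and "0 \<le> p" "p \<le> 1"
  shows "(\<integral>\<^sup>+\<omega>. f \<omega> \<partial>coin_space p) =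
    ennreal p * (\<integral>\<^sup>+\<omega>. f (True ## \<omega>) \<partial>coin_space p) +
    ennreal (1 - p) * (\<integral>\<^sup>+\<omega>. f (False ## \<omega>) \<partial>coin_space p)"
proof -
  have "(\<integral>\<^sup>+\<omega>. f \<omega> \<partial>coin_space p) =
      (\<integral>\<^sup>+b. (\<integral>\<^sup>+\<omega>. f (b ## \<omega>) \<partial>coin_space p) \<partial>measure_pmf (bernoulli_pmf p))"
    using assms(1) unfolding coin_space_def
    by (rule prob_space.nn_integral_stream_space[OF prob_space_measure_pmf])
  also have "\<dots> = (\<Sum>b\<in>UNIV. (\<integral>\<^sup>+\<omega>. f (b ## \<omega>) \<partial>coin_space p) * pmf (bernoulli_pmf p) b)"
    by (rule nn_integral_measure_pmf_support) auto
  finally show ?thesis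
    using assms by (simp add: UNIV_bool mult.commute)
qed

lemma measure_coin_space_Cons:
  assumes A: "A \<in> sets (coin_space p)" and p: "0 \<le> p" "p \<le> 1"
  shows "measure (coin_space p) A =
    p * measure (coin_space p) {\<omega>. True ## \<omega> \<in> A} +
    (1 - p) * measure (coin_space p) {\<omega>. False ## \<omega> \<in> A}"
proof -
  have sections: "{\<omega>. b ## \<omega> \<in> A} \<in> sets (coin_space p)" for b
    using measurable_sets[OF measurable_Cons_coin_space A] by (simp add: vimage_def)
  have "ennreal (measure (coin_space p) A) = (\<integral>\<^sup>+\<omega>. indicator A \<omega> \<partial>coin_space p)"
    using A by (simp add: coin_space.emeasure_eq_measure)
  also have "\<dots> = ennreal p * emeasure (coin_space p) {\<omega>. True ## \<omega> \<in> A} +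
      ennreal (1 - p) * emeasure (coin_space p) {\<omega>. False ## \<omega> \<in> A}"
    using A p sections
    by (subst nn_integral_coin_space_Cons) (auto simp flip: nn_integral_indicator
        intro!: arg_cong2[where f="(+)"] arg_cong2[where f="(*)"] nn_integral_cong
        split: split_indicator)
  also have "\<dots> = ennreal (p * measure (coin_space p) {\<omega>. True ## \<omega> \<in> A} +
      (1 - p) * measure (coin_space p) {\<omega>. False ## \<omega> \<in> A})"
    using p by (simp add: coin_space.emeasure_eq_measure ennreal_convex_combination)
  finally show ?thesis
    using p by (subst (asm) ennreal_inj) auto
qed

section \<open>Moments of the bet\<close>

lemma bet_pos: "bet \<omega> n > 0"
  by (induction n) auto

lemma bet_Cons_True: "bet (True ## \<omega>) (Suc n) = 2 * bet \<omega> n"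
  by (induction n) (simp_all add: xi_def)

lemma bet_Cons_False: "bet (False ## \<omega>) (Suc n) = bet \<omega> n / 2"
  by (induction n) (simp_all add: xi_def powr_minus_divide)

definition bet_moment_ratio :: "real \<Rightarrow> real \<Rightarrow> real" where
  "bet_moment_ratio p a = p * 2 powr a + (1 - p) / 2 powr a"

lemma bet_moment_ratio_nonneg: "0 \<le> p \<Longrightarrow> p \<le> 1 \<Longrightarrow> 0 \<le> bet_moment_ratio p a"
  by (simp add: bet_moment_ratio_def)

lemma nn_integral_bet_powr:
  assumes p: "0 \<le> p" "p \<le> 1"
  shows "(\<integral>\<^sup>+\<omega>. bet \<omega> n powr a \<partial>coin_space p) = bet_moment_ratio p a ^ n"
proof (induction n)
  case 0
  show ?case using coin_space.emeasure_space_1 by simp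
next
  case (Suc n)
  have win: "(\<integral>\<^sup>+\<omega>. bet (True ## \<omega>) (Suc n) powr a \<partial>coin_space p) =
      2 powr a * bet_moment_ratio p a ^ n"
    using Suc by (simp add: bet_Cons_True powr_mult ennreal_mult' nn_integral_cmult del: bet.simps)
  have "(\<integral>\<^sup>+\<omega>. bet (False ## \<omega>) (Suc n) powr a \<partial>coin_space p) =
      (\<integral>\<^sup>+\<omega>. ennreal (1 / 2 powr a) * bet \<omega> n powr a \<partial>coin_space p)"
    by (rule nn_integral_cong) (simp add: bet_Cons_False powr_divide ennreal_mult'[symmetric]
        del: bet.simps)
  also have "\<dots> = bet_moment_ratio p a ^ n / 2 powr a"
    using Suc by (subst nn_integral_cmult) (simp_all add: ennreal_mult'[symmetric])
  finally have loss: "(\<integral>\<^sup>+\<omega>. bet (False ## \<omega>) (Suc n) powr a \<partial>coin_space p) =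
      bet_moment_ratio p a ^ n / 2 powr a" .
  have "(\<integral>\<^sup>+\<omega>. bet \<omega> (Suc n) powr a \<partial>coin_space p) =
      ennreal p * (2 powr a * bet_moment_ratio p a ^ n) +
      ennreal (1 - p) * (bet_moment_ratio p a ^ n / 2 powr a)"
    using p win loss by (subst nn_integral_coin_space_Cons) simp_all
  also have "\<dots> = ennreal (p * (2 powr a * bet_moment_ratio p a ^ n) +
      (1 - p) * (bet_moment_ratio p a ^ n / 2 powr a))"
    using p bet_moment_ratio_nonneg[OF p] by (intro ennreal_convex_combination) simp_all
  also have "p * (2 powr a * bet_moment_ratio p a ^ n) +
      (1 - p) * (bet_moment_ratio p a ^ n / 2 powr a) = bet_moment_ratio p a ^ Suc n"
    by (simp add: bet_moment_ratio_def algebra_simps)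
  finally show ?case .
qed

lemma exists_bet_moment_ratio_less_1:
  assumes p: "0 < p" "p < 1 / 2"
  shows "\<exists>a. 0 < a \<and> a \<le> 1 \<and> bet_moment_ratio p a < 1"
proof -
  define t where "t = (1 + min 2 ((1 - p) / p)) / 2"
  have "1 < (1 - p) / p" using p by (simp add: field_simps)
  then have t: "1 < t" "t \<le> 2" "p * t < 1 - p"
    using p by (auto simp: t_def min_def field_simps)
  define a where "a = log 2 t"
  have "(p * t - (1 - p)) * (t - 1) < 0"
    using t by (simp add: mult_neg_pos)
  then have "p * t + (1 - p) / t < 1"
    using t by (simp add: field_simps)
  moreover have "2 powr a = t"
    using t by (simp add: a_def)
  moreover have "0 < a" "a \<le> 1"
    using t by (simp_all add: a_def)
  ultimately show ?thesis
    by (auto simp: bet_moment_ratio_def)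
qed

lemma measure_bet_ge:
  assumes "0 \<le> p" "p \<le> 1" "0 < \<delta>" "0 < a"
  shows "measure (coin_space p) {\<omega>. \<delta> \<le> bet \<omega> n} \<le> bet_moment_ratio p a ^ n / \<delta> powr a"
  using coin_space.Markov_inequality_powr[of "\<lambda>\<omega>. bet \<omega> n" p \<delta> a "bet_moment_ratio p a ^ n"] assms
  by (simp add: nn_integral_bet_powr bet_moment_ratio_nonneg)

section \<open>Won stakes\<close>

definition won_stakes :: "nat \<Rightarrow> bool stream \<Rightarrow> real" where
  "won_stakes n \<omega> = (\<Sum>k<n. if \<omega> !! k then bet \<omega> k else 0)"

lemma borel_measurable_won_stakes [measurable]:
  "won_stakes n \<in> borel_measurable (coin_space p)"
  unfolding won_stakes_def by measurable

lemma won_stakes_0 [simp]: "won_stakes 0 \<omega> = 0"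
  by (simp add: won_stakes_def)

lemma won_stakes_Suc: "won_stakes (Suc n) \<omega> = won_stakes n \<omega> + (if \<omega> !! n then bet \<omega> n else 0)"
  by (simp add: won_stakes_def)

lemma won_stakes_nonneg: "0 \<le> won_stakes n \<omega>"
  unfolding won_stakes_def by (rule sum_nonneg) (simp add: less_imp_le[OF bet_pos])

lemma won_stakes_mono: "m \<le> n \<Longrightarrow> won_stakes m \<omega> \<le> won_stakes n \<omega>"
proof (induction n rule: dec_induct)
  case (step n)
  then show ?case using bet_pos[of \<omega> n] by (simp add: won_stakes_Suc)
qed simp

lemma won_stakes_Cons_True: "won_stakes (Suc n) (True ## \<omega>) = 1 + 2 * won_stakes n \<omega>"
  unfolding won_stakes_def sum.lessThan_Suc_shift
  by (simp add: bet_Cons_True sum_distrib_left if_distrib[of "(*) 2"]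
      del: bet.simps(2) cong: if_cong)

lemma won_stakes_Cons_False: "won_stakes (Suc n) (False ## \<omega>) = won_stakes n \<omega> / 2"
  unfolding won_stakes_def sum.lessThan_Suc_shift
  by (simp add: bet_Cons_False sum_divide_distrib if_distrib[of "\<lambda>y. y / 2"]
      del: bet.simps(2) cong: if_cong)

lemma fortune_eq_won_stakes: "fortune x \<omega> n = x - 2 + 2 * bet \<omega> n - won_stakes n \<omega>"
  by (induction n) (auto simp: won_stakes_Suc xi_def powr_minus_divide)

lemma won_stakes_powr_le:
  assumes "0 < a" "a \<le> 1"
  shows "won_stakes n \<omega> powr a \<le> (\<Sum>k<n. bet \<omega> k powr a)"
proof (induction n)
  case (Suc n)
  have "won_stakes (Suc n) \<omega> powr a \<le>
      won_stakes n \<omega> powr a + (if \<omega> !! n then bet \<omega> n else 0) powr a"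
    unfolding won_stakes_Suc
    using assms won_stakes_nonneg less_imp_le[OF bet_pos] by (intro powr_add_le_add_powr) auto
  also have "(if \<omega> !! n then bet \<omega> n else 0) powr a \<le> bet \<omega> n powr a"
    by simp
  finally show ?case
    using Suc by simp
qed simp

section \<open>Probability that the won stakes exceed a level\<close>

definition won_above :: "nat \<Rightarrow> real \<Rightarrow> bool stream set" where
  "won_above n c = {\<omega>. c < won_stakes n \<omega>}"

definition ever_won_above :: "real \<Rightarrow> bool stream set" where
  "ever_won_above c = (\<Union>n. won_above n c)"

definition ever_won_above_prob :: "real \<Rightarrow> real \<Rightarrow> real" where
  "ever_won_above_prob p c = measure (coin_space p) (ever_won_above c)"

lemma sets_won_above [measurable]: "won_above n c \<in> sets (coin_space p)"
  unfolding won_above_def by (intro sets_coin_space_Collect) measurable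

lemma sets_ever_won_above [measurable]: "ever_won_above c \<in> sets (coin_space p)"
  unfolding ever_won_above_def by measurable

lemma won_above_0: "won_above 0 c = (if c < 0 then UNIV else {})"
  by (simp add: won_above_def)

lemma won_above_neg: "c < 0 \<Longrightarrow> won_above n c = UNIV"
  using won_stakes_nonneg by (auto simp: won_above_def intro: less_le_trans)

lemma ever_won_above_neg: "c < 0 \<Longrightarrow> ever_won_above c = UNIV"
  by (simp add: ever_won_above_def won_above_neg)

lemma incseq_won_above: "incseq (\<lambda>n. won_above n c)"
  unfolding incseq_def won_above_def using won_stakes_mono by (auto intro: less_le_trans)

lemma ever_won_above_antimono: "c \<le> d \<Longrightarrow> ever_won_above d \<subseteq> ever_won_above c"
  by (auto simp: ever_won_above_def won_above_def)

lemma won_above_Suc_Cons: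
  "{\<omega>. True ## \<omega> \<in> won_above (Suc n) c} = won_above n ((c - 1) / 2)"
  "{\<omega>. False ## \<omega> \<in> won_above (Suc n) c} = won_above n (2 * c)"
  by (auto simp: won_above_def won_stakes_Cons_True won_stakes_Cons_False)

lemma won_above_double_subset: "won_above n (2 * c) \<subseteq> won_above n ((c - 1) / 2)"
proof (cases "c < 0")
  case True
  then show ?thesis by (simp add: won_above_neg)
next
  case False
  then show ?thesis by (auto simp: won_above_def)
qed

lemma ever_won_above_double_subset: "ever_won_above (2 * c) \<subseteq> ever_won_above ((c - 1) / 2)"
  unfolding ever_won_above_def using won_above_double_subset by blast

lemma measure_won_above_Suc:
  assumes "0 \<le> p" "p \<le> 1"
  shows "measure (coin_space p) (won_above (Suc n) c) =
    p * measure (coin_space p) (won_above n ((c - 1) / 2)) +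
    (1 - p) * measure (coin_space p) (won_above n (2 * c))"
  using measure_coin_space_Cons[OF sets_won_above assms] by (simp add: won_above_Suc_Cons)

lemma nn_integral_won_stakes_powr_le:
  assumes "0 \<le> p" "p \<le> 1" "0 < a" "a \<le> 1" "bet_moment_ratio p a < 1"
  shows "(\<integral>\<^sup>+\<omega>. won_stakes n \<omega> powr a \<partial>coin_space p) \<le> 1 / (1 - bet_moment_ratio p a)"
proof -
  have "(\<integral>\<^sup>+\<omega>. won_stakes n \<omega> powr a \<partial>coin_space p) \<le>
      (\<integral>\<^sup>+\<omega>. (\<Sum>k<n. ennreal (bet \<omega> k powr a)) \<partial>coin_space p)"
    using assms by (intro nn_integral_mono) (simp add: ennreal_leI won_stakes_powr_le)
  also have "\<dots> = (\<Sum>k<n. ennreal (bet_moment_ratio p a ^ k))"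
    using assms by (subst nn_integral_sum) (simp_all add: nn_integral_bet_powr)
  also have "\<dots> \<le> 1 / (1 - bet_moment_ratio p a)"
    using assms bet_moment_ratio_nonneg[of p a]
    by (simp add: sum_gp_strict divide_right_mono ennreal_leI)
  finally show ?thesis .
qed

lemma measure_won_above_le:
  assumes "0 \<le> p" "p \<le> 1" "0 < a" "a \<le> 1" "bet_moment_ratio p a < 1" "0 < c"
  shows "measure (coin_space p) (won_above n c) \<le> 1 / (1 - bet_moment_ratio p a) / c powr a"
proof -
  have "measure (coin_space p) (won_above n c) \<le> measure (coin_space p) {\<omega>. c \<le> won_stakes n \<omega>}"
    by (intro coin_space.finite_measure_mono sets_coin_space_Collect)
      (auto simp: won_above_def, measurable)
  also have "\<dots> \<le> 1 / (1 - bet_moment_ratio p a) / c powr a"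
    using assms nn_integral_won_stakes_powr_le[OF assms(1-5)]
    by (intro coin_space.Markov_inequality_powr[of "won_stakes n" p c a, simplified]) simp_all
  finally show ?thesis .
qed

lemma LIMSEQ_measure_won_above:
  "(\<lambda>n. measure (coin_space p) (won_above n c)) \<longlonglongrightarrow> ever_won_above_prob p c"
  unfolding ever_won_above_prob_def ever_won_above_def
  by (rule coin_space.finite_Lim_measure_incseq) (auto intro: incseq_won_above)

lemma ever_won_above_prob_rec:
  assumes "0 \<le> p" "p \<le> 1"
  shows "ever_won_above_prob p c =
    p * ever_won_above_prob p ((c - 1) / 2) + (1 - p) * ever_won_above_prob p (2 * c)"
proof (rule LIMSEQ_unique)
  show "(\<lambda>n. measure (coin_space p) (won_above (Suc n) c)) \<longlonglongrightarrow> ever_won_above_prob p c"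
    by (rule LIMSEQ_Suc[OF LIMSEQ_measure_won_above])
  show "(\<lambda>n. measure (coin_space p) (won_above (Suc n) c)) \<longlonglongrightarrow>
      p * ever_won_above_prob p ((c - 1) / 2) + (1 - p) * ever_won_above_prob p (2 * c)"
    unfolding measure_won_above_Suc[OF assms]
    by (intro tendsto_intros LIMSEQ_measure_won_above)
qed

lemma ever_won_above_prob_neg: "c < 0 \<Longrightarrow> ever_won_above_prob p c = 1"
  by (simp add: ever_won_above_prob_def ever_won_above_neg)

lemma ever_won_above_prob_le_1: "ever_won_above_prob p c \<le> 1"
  by (simp add: ever_won_above_prob_def)

lemma ever_won_above_prob_antimono:
  "c \<le> d \<Longrightarrow> ever_won_above_prob p d \<le> ever_won_above_prob p c"
  unfolding ever_won_above_prob_def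
  by (intro coin_space.finite_measure_mono ever_won_above_antimono) simp_all

lemma ever_won_above_prob_double_le:
  "ever_won_above_prob p (2 * c) \<le> ever_won_above_prob p ((c - 1) / 2)"
  unfolding ever_won_above_prob_def
  by (intro coin_space.finite_measure_mono ever_won_above_double_subset) simp

lemma measure_won_above_mono_prob:
  assumes "0 \<le> p" "p \<le> p'" "p' \<le> 1"
  shows "measure (coin_space p) (won_above n c) \<le> measure (coin_space p') (won_above n c)"
proof (induction n arbitrary: c)
  case 0
  show ?case by (simp add: won_above_0)
next
  case (Suc n)
  have "measure (coin_space p') (won_above n (2 * c)) \<le>
      measure (coin_space p') (won_above n ((c - 1) / 2))"
    by (intro coin_space.finite_measure_mono won_above_double_subset) simp
  then show ?case
    using assms Suc by (simp add: measure_won_above_Suc convex_combination_mono)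
qed

lemma ever_won_above_prob_mono:
  assumes "0 \<le> p" "p \<le> p'" "p' \<le> 1"
  shows "ever_won_above_prob p c \<le> ever_won_above_prob p' c"
  using measure_won_above_mono_prob[OF assms]
  by (intro LIMSEQ_le[OF LIMSEQ_measure_won_above LIMSEQ_measure_won_above]) auto

lemma exists_ever_won_above_prob_less_1:
  assumes p: "0 < p" "p < 1 / 2"
  obtains C where "ever_won_above_prob p C < 1"
proof -
  obtain a where a: "0 < a" "a \<le> 1" and ratio: "bet_moment_ratio p a < 1"
    using exists_bet_moment_ratio_less_1[OF p] by blast
  define K where "K = 1 / (1 - bet_moment_ratio p a)"
  have K: "0 < K"
    using ratio by (simp add: K_def)
  define C where "C = (2 * K) powr (1 / a)"
  have C: "0 < C" "C powr a = 2 * K"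
    using K a by (simp_all add: C_def powr_powr)
  have "measure (coin_space p) (won_above n C) \<le> 1 / 2" for n
    using measure_won_above_le[of p a C n] p a ratio C K by (simp add: K_def)
  then have "ever_won_above_prob p C \<le> 1 / 2"
    by (intro LIMSEQ_le_const2[OF LIMSEQ_measure_won_above]) auto
  then show thesis
    by (intro that[of C]) simp
qed

lemma ever_won_above_prob_doubling:
  assumes "0 \<le> p" "p \<le> 1"
  shows "(1 - p) ^ j * (1 - ever_won_above_prob p (2 ^ j * c)) \<le> 1 - ever_won_above_prob p c"
proof (induction j arbitrary: c)
  case (Suc j)
  have "0 \<le> p * (1 - ever_won_above_prob p ((c - 1) / 2))"
    using assms ever_won_above_prob_le_1 by simp
  then have step: "(1 - p) * (1 - ever_won_above_prob p (2 * c)) \<le> 1 - ever_won_above_prob p c"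
    using ever_won_above_prob_rec[OF assms, of c] by (simp add: algebra_simps)
  have "(1 - p) ^ Suc j * (1 - ever_won_above_prob p (2 ^ Suc j * c)) =
      (1 - p) * ((1 - p) ^ j * (1 - ever_won_above_prob p (2 ^ j * (2 * c))))"
    by (simp add: mult_ac)
  also have "\<dots> \<le> (1 - p) * (1 - ever_won_above_prob p (2 * c))"
    using assms Suc.IH by (intro mult_left_mono) simp_all
  finally show ?case
    using step by linarith
qed simp

lemma ever_won_above_prob_less_1:
  assumes p: "0 < p" "p < 1 / 2" and "0 < c"
  shows "ever_won_above_prob p c < 1"
proof -
  obtain C where C: "ever_won_above_prob p C < 1"
    using exists_ever_won_above_prob_less_1[OF p] by blast
  obtain j where "C / c < 2 ^ j"
    using real_arch_pow[of 2 "C / c"] by auto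
  then have "C \<le> 2 ^ j * c"
    using \<open>0 < c\<close> by (simp add: divide_less_eq)
  then have "0 < (1 - p) ^ j * (1 - ever_won_above_prob p (2 ^ j * c))"
    using C p ever_won_above_prob_antimono[of C "2 ^ j * c" p] by simp
  with ever_won_above_prob_doubling[of p j c] p show ?thesis
    by simp
qed

lemma ever_won_above_prob_strict_mono:
  assumes p: "0 < p" "p < p'" "p' < 1 / 2" and "0 < c"
  shows "ever_won_above_prob p c < ever_won_above_prob p' c"
proof -
  define D where "D c = ever_won_above_prob p' c - ever_won_above_prob p c" for c
  define gap where
    "gap c = ever_won_above_prob p' ((c - 1) / 2) - ever_won_above_prob p' (2 * c)" for c
  have D_rec: "D c = p * D ((c - 1) / 2) + (1 - p) * D (2 * c) + (p' - p) * gap c" for c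
    using ever_won_above_prob_rec[of p c] ever_won_above_prob_rec[of p' c] p
    by (simp add: D_def gap_def algebra_simps)
  have D_nonneg: "0 \<le> D c" for c
    using ever_won_above_prob_mono[of p p' c] p by (simp add: D_def)
  have gap_nonneg: "0 \<le> gap c" for c
    using ever_won_above_prob_double_le[of p' c] by (simp add: gap_def)
  have D_ge: "p * D ((c - 1) / 2) \<le> D c" "(1 - p) * D (2 * c) \<le> D c" for c
    using D_rec[of c] D_nonneg[of "(c - 1) / 2"] D_nonneg[of "2 * c"] gap_nonneg[of c] p
    by (simp_all add: add_increasing add_increasing2)
  have base: "0 < D c" if "0 < c" "c < 1" for c
  proof -
    have "0 < gap c"
      using that p ever_won_above_prob_less_1[of p' "2 * c"]
      by (simp add: gap_def ever_won_above_prob_neg)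
    then have "0 < (p' - p) * gap c"
      using p by simp
    moreover have "0 \<le> p * D ((c - 1) / 2)" "0 \<le> (1 - p) * D (2 * c)"
      using D_nonneg p by simp_all
    ultimately show ?thesis
      using D_rec[of c] by linarith
  qed
  have step: "0 < D c" if "0 < D (c - 1 / 2)" for c
  proof -
    have "0 < p * D (c - 1 / 2)"
      using that p by simp
    also have "\<dots> \<le> D (2 * c)"
      using D_ge(1)[of "2 * c"] by (simp add: diff_divide_distrib)
    finally have "0 < (1 - p) * D (2 * c)"
      using p by simp
    then show ?thesis
      using D_ge(2)[of c] by linarith
  qed
  have "0 < D c"
    using \<open>0 < c\<close> base step by (rule real_half_step_induct)
  then show ?thesis
    by (simp add: D_def)
qed

section \<open>Ruin\<close>

lemma null_sets_bets_bounded_below: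
  assumes p: "0 < p" "p < 1 / 2" and "0 < \<delta>"
  shows "{\<omega>. \<forall>n\<ge>N. \<delta> \<le> bet \<omega> n} \<in> null_sets (coin_space p)"
proof -
  obtain a where a: "0 < a" "a \<le> 1" and ratio: "bet_moment_ratio p a < 1"
    using exists_bet_moment_ratio_less_1[OF p] by blast
  define r where "r = bet_moment_ratio p a"
  have r: "0 \<le> r" "r < 1"
    using p ratio by (simp_all add: r_def bet_moment_ratio_nonneg)
  define B where "B = {\<omega>. \<forall>n\<ge>N. \<delta> \<le> bet \<omega> n}"
  have B: "B \<in> sets (coin_space p)"
    unfolding B_def by (intro sets_coin_space_Collect) measurable
  have "measure (coin_space p) B \<le> r ^ n / \<delta> powr a" if "N \<le> n" for n
  proof -
    have "measure (coin_space p) B \<le> measure (coin_space p) {\<omega>. \<delta> \<le> bet \<omega> n}"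
      using that B by (intro coin_space.finite_measure_mono sets_coin_space_Collect)
        (auto simp: B_def, measurable)
    also have "\<dots> \<le> r ^ n / \<delta> powr a"
      using \<open>0 < \<delta>\<close> a p by (simp add: r_def measure_bet_ge)
    finally show ?thesis .
  qed
  moreover have "(\<lambda>n. r ^ n / \<delta> powr a) \<longlonglongrightarrow> 0"
    using r by (intro tendsto_divide_zero LIMSEQ_power_zero) simp_all
  ultimately have "measure (coin_space p) B \<le> 0"
    by (intro LIMSEQ_le_const) auto
  then show ?thesis
    using B by (simp add: B_def null_sets_def coin_space.emeasure_eq_measure measure_le_0_iff)
qed

lemma AE_bets_frequently_small:
  assumes "0 < p" "p < 1 / 2"
  shows "AE \<omega> in coin_space p. \<forall>\<delta>>0. \<forall>N. \<exists>n\<ge>N. bet \<omega> n < \<delta>"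
proof (rule AE_I')
  show "(\<Union>j N. {\<omega>. \<forall>n\<ge>N. 1 / Suc j \<le> bet \<omega> n}) \<in> null_sets (coin_space p)"
    using assms by (intro null_sets_UN null_sets_bets_bounded_below) simp_all
  show "{\<omega> \<in> space (coin_space p). \<not> (\<forall>\<delta>>0. \<forall>N. \<exists>n\<ge>N. bet \<omega> n < \<delta>)} \<subseteq>
      (\<Union>j N. {\<omega>. \<forall>n\<ge>N. 1 / Suc j \<le> bet \<omega> n})"
  proof
    fix \<omega>
    assume "\<omega> \<in> {\<omega> \<in> space (coin_space p). \<not> (\<forall>\<delta>>0. \<forall>N. \<exists>n\<ge>N. bet \<omega> n < \<delta>)}"
    then obtain \<delta> N where "0 < \<delta>" and bounded: "\<forall>n\<ge>N. \<delta> \<le> bet \<omega> n"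
      by (auto simp: not_less)
    then obtain j :: nat where "1 / Suc j < \<delta>"
      using reals_Archimedean by (auto simp: inverse_eq_divide)
    then have "\<forall>n\<ge>N. 1 / Suc j \<le> bet \<omega> n"
      using bounded by force
    then show "\<omega> \<in> (\<Union>j N. {\<omega>. \<forall>n\<ge>N. 1 / Suc j \<le> bet \<omega> n})"
      by blast
  qed
qed

lemma ruined_iff_ever_won_above:
  assumes small: "\<forall>\<delta>>0. \<forall>N. \<exists>n\<ge>N. bet \<omega> n < \<delta>"
  shows "(\<exists>n. fortune x \<omega> n \<le> 0) \<longleftrightarrow> \<omega> \<in> ever_won_above (x - 2)"
proof
  assume "\<exists>n. fortune x \<omega> n \<le> 0"
  then obtain n where "fortune x \<omega> n \<le> 0" ..
  then have "x - 2 < won_stakes n \<omega>"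
    using bet_pos[of \<omega> n] by (simp add: fortune_eq_won_stakes)
  then show "\<omega> \<in> ever_won_above (x - 2)"
    by (auto simp: ever_won_above_def won_above_def)
next
  assume "\<omega> \<in> ever_won_above (x - 2)"
  then obtain N where N: "x - 2 < won_stakes N \<omega>"
    by (auto simp: ever_won_above_def won_above_def)
  then obtain n where n: "N \<le> n" "bet \<omega> n < (won_stakes N \<omega> - (x - 2)) / 2"
    using small by (meson half_gt_zero diff_gt_0_iff_gt)
  have "won_stakes N \<omega> \<le> won_stakes n \<omega>"
    using n(1) by (rule won_stakes_mono)
  with n(2) have "fortune x \<omega> n \<le> 0"
    by (simp add: fortune_eq_won_stakes)
  then show "\<exists>n. fortune x \<omega> n \<le> 0" ..
qed

lemma ruin_prob_eq_ever_won_above_prob: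
  assumes "0 < p" "p < 1 / 2"
  shows "ruin_prob x p = ever_won_above_prob p (x - 2)"
proof -
  have "measure (coin_space p) {\<omega>. \<exists>n. fortune x \<omega> n \<le> 0} =
      measure (coin_space p) (ever_won_above (x - 2))"
  proof (rule measure_eq_AE)
    show "AE \<omega> in coin_space p.
        \<omega> \<in> {\<omega>. \<exists>n. fortune x \<omega> n \<le> 0} \<longleftrightarrow> \<omega> \<in> ever_won_above (x - 2)"
      using AE_bets_frequently_small[OF assms]
      by eventually_elim (simp add: ruined_iff_ever_won_above)
    show "{\<omega>. \<exists>n. fortune x \<omega> n \<le> 0} \<in> sets (coin_space p)"
      by (intro sets_coin_space_Collect) measurable
  qed simp
  then show ?thesis
    by (simp add: ruin_prob_def ever_won_above_prob_def)
qed

theorem corollary1p4: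
  fixes x :: real
  assumes "x > 2"
  shows "strict_mono_on {0<..<1/2} (\<lambda>p. ruin_prob x p)"
proof (rule strict_mono_onI)
  fix p p' :: real
  assume "p \<in> {0<..<1/2}" "p' \<in> {0<..<1/2}" "p < p'"
  then show "ruin_prob x p < ruin_prob x p'"
    using assms by (simp add: ruin_prob_eq_ever_won_above_prob ever_won_above_prob_strict_mono)
qed

end
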